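(* Let $F$ be a field whose characteristic is not $2$, and let $k\geq 2$ be an integer. Then for every $x\in F$ there exist $a_1,\ldots,a_{2k}\in F$ such that $a_1+a_2+\cdots+a_{2k}=x=a_1a_2\cdots a_{2k}$. *)

theory Defs
  imports Main
begin

end

theory Submission
  imports Defs
begin

(* Write 2k = 4 + 2m and let \<delta> = (-1)^m. Appending m pairs (-1, 1) to a list leaves its sum
   unchanged and multiplies its product by \<delta>, so it suffices to find four elements with sum x
   and product \<delta> x. The quadruple (x + r, -r, u/r, -u/r) has sum x and product u^2 (x + r) / r,
   and r can be chosen to make this \<delta> x unless x = \<delta> u^2. Taking u = 1 handles x \<noteq> \<delta>,
   and u = 2 handles x = \<delta> unless 3 = 0 (here 2 \<noteq> 0 is needed); in characteristic 3 the
   quadruple (\<delta>, \<delta>, \<delta>, \<delta>) works. *)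

lemma two_neq_zero_if_CHAR_neq_2:
  assumes "CHAR('a::field) \<noteq> 2"
  shows "(2::'a) \<noteq> 0"
proof
  assume "(2::'a) = 0"
  then have "CHAR('a) dvd 2"
    using of_nat_eq_0_iff_char_dvd[of 2, where 'a='a] by simp
  moreover from this have "CHAR('a) \<noteq> 0"
    by (intro notI) simp
  ultimately have "CHAR('a) \<le> 2" and "CHAR('a) \<noteq> 0"
    by (simp_all add: dvd_imp_le)
  with assms CHAR_not_1[where 'a='a] show False
    by linarith
qed

lemma exists_four_sum_prod_sign_of_neq:
  fixes x u \<delta> :: "'a::field"
  assumes "u \<noteq> 0" and "x \<noteq> \<delta> * u\<^sup>2" and "\<delta> * \<delta> = 1"
  shows "\<exists>p q s t. p + q + s + t = x \<and> p * q * s * t = \<delta> * x"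
proof -
  define r where "r = \<delta> * u\<^sup>2 * x / (x - \<delta> * u\<^sup>2)"
  have r: "u\<^sup>2 * (x + r) = \<delta> * x * r"
    using assms(2,3) unfolding r_def by (simp add: field_simps power2_eq_square)
  have "(x + r) * - r * (u / r) * - (u / r) = \<delta> * x"
  proof (cases "r = 0")
    case True
    with r assms(1) show ?thesis by simp
  next
    case False
    then have "(x + r) * - r * (u / r) * - (u / r) = u\<^sup>2 * (x + r) / r"
      by (simp add: field_simps power2_eq_square)
    with r False show ?thesis by simp
  qed
  moreover have "(x + r) + - r + u / r + - (u / r) = x"
    by simp
  ultimately show ?thesis by blast
qed

lemma exists_four_sum_prod_sign:
  fixes x \<delta> :: "'a::field"
  assumes "CHAR('a) \<noteq> 2" and "\<delta> * \<delta> = 1"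
  shows "\<exists>p q s t. p + q + s + t = x \<and> p * q * s * t = \<delta> * x"
proof (cases "x = \<delta>")
  case False
  then show ?thesis
    using exists_four_sum_prod_sign_of_neq[of 1 x \<delta>] assms(2) by simp
next
  case True
  show ?thesis
  proof (cases "(3::'a) = 0")
    case False
    have "\<delta> * 2\<^sup>2 - x = 3 * \<delta>"
      using True by simp
    moreover have "3 * \<delta> \<noteq> 0"
      using False assms(2) by auto
    ultimately have "x \<noteq> \<delta> * 2\<^sup>2"
      by (metis diff_self)
    then show ?thesis
      using exists_four_sum_prod_sign_of_neq[of 2 x \<delta>] two_neq_zero_if_CHAR_neq_2 assms
      by blast
  next
    case True
    have "\<delta> + \<delta> + \<delta> + \<delta> = \<delta> + 3 * \<delta>"
      by simp
    with True \<open>x = \<delta>\<close> assms(2)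
    have "\<delta> + \<delta> + \<delta> + \<delta> = x" and "\<delta> * \<delta> * \<delta> * \<delta> = \<delta> * x"
      by simp_all
    then show ?thesis by blast
  qed
qed

lemma sum_list_alternating_signs:
  "sum_list (concat (replicate m [-1, 1 :: 'a::ring_1])) = 0"
  by (induction m) simp_all

lemma prod_list_alternating_signs:
  "prod_list (concat (replicate m [-1, 1 :: 'a::comm_ring_1])) = (-1) ^ m"
  by (induction m) simp_all

lemma exists_list_sum_eq_prod_eq:
  fixes x :: "'a::field"
  assumes "CHAR('a) \<noteq> 2" and "k \<ge> 2"
  shows "\<exists>xs. length xs = 2 * k \<and> sum_list xs = x \<and> prod_list xs = x"
proof -
  obtain m where k: "k = m + 2"
    using assms(2) by (metis add.commute le_Suc_ex)
  define \<delta> :: 'a where "\<delta> = (-1) ^ m"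
  have \<delta>: "\<delta> * \<delta> = 1"
    unfolding \<delta>_def by (simp flip: power_add)
  then obtain p q s t where sum: "p + q + s + t = x" and prod: "p * q * s * t = \<delta> * x"
    using exists_four_sum_prod_sign assms(1) by blast
  define xs where "xs = [p, q, s, t] @ concat (replicate m [-1, 1])"
  have "length xs = 2 * k"
    unfolding xs_def k by (simp add: length_concat sum_list_replicate)
  moreover have "sum_list xs = x"
    unfolding xs_def using sum by (simp add: sum_list_alternating_signs add.assoc)
  moreover have "prod_list xs = x"
  proof -
    have "prod_list xs = p * q * s * t * \<delta>"
      unfolding xs_def \<delta>_def by (simp add: prod_list_alternating_signs mult.assoc)
    also have "\<dots> = (\<delta> * \<delta>) * x"
      using prod by (simp add: ac_simps)
    finally show ?thesis
      using \<delta> by simp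
  qed
  ultimately show ?thesis by blast
qed

lemma sum_atLeast1_nth: "(\<Sum>i = 1..length xs. xs ! (i - 1)) = sum_list xs"
  by (simp add: sum.list_conv_set_nth atLeast0LessThan sum.atLeast1_atMost_eq)

lemma prod_atLeast1_nth: "(\<Prod>i = 1..length xs. xs ! (i - 1)) = prod_list xs"
  by (simp add: prod.list_conv_set_nth atLeast0LessThan prod.atLeast1_atMost_eq)

theorem theorem1p3:
  fixes x :: "'a :: field" and k :: nat
  assumes "CHAR('a) \<noteq> 2" and "k \<ge> 2"
  shows "\<exists>a :: nat \<Rightarrow> 'a. (\<Sum>i = 1..2*k. a i) = x \<and> (\<Prod>i = 1..2*k. a i) = x"
proof -
  obtain xs :: "'a list" where "length xs = 2 * k" and "sum_list xs = x" and "prod_list xs = x"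
    using exists_list_sum_eq_prod_eq assms by blast
  then show ?thesis
    using sum_atLeast1_nth[of xs] prod_atLeast1_nth[of xs] by metis
qed

end
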